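(* Let $\Sigma$ be a $d\times d$ positive semidefinite matrix with $\|\Sigma\|_{\mathrm{op}}\leq\frac{1}{2}\mathrm{Tr}(\Sigma)$. Then there exists a symmetric probability measure $\mu$ on $\mathbb{R}^{d}$ supported on $\{x\in\mathbb{R}^{d}:\|x\|_{2}^{2}=\mathrm{Tr}(\Sigma)\}$ with $\int_{\mathbb{R}^{d}}xx^{T}\,d\mu(x)=\Sigma$ such that for every $n\in\mathbb{N}$, if $X_{1},\ldots,X_{n}$ are i.i.d. random vectors with distribution $\mu$, then \[\mathbb{E}\left[W_{2,1}\Big(\mu,\frac{1}{2n}\sum_{i=1}^{n}(\delta_{X_{i}}+\delta_{-X_{i}})\Big)^{2}\right]\geq\frac{1}{16}\|\Sigma\|_{\mathrm{op}}\left(\frac{\mathrm{Tr}(\Sigma)}{n\|\Sigma\|_{\mathrm{op}}}+\sqrt{\frac{\mathrm{Tr}(\Sigma)}{n\|\Sigma\|_{\mathrm{op}}}}\right).\]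
   Context: A probability measure $\mu$ on $\mathbb{R}^{d}$ is symmetric if $\mu(A)=\mu(-A)$ for all measurable $A$. $\|\cdot\|_{\mathrm{op}}$ is the operator norm. For probability measures $\nu_{1},\nu_{2}$ on $\mathbb{R}$, $W_{2}(\nu_{1},\nu_{2})=\inf_{\gamma}\left(\int|x-y|^{2}\,d\gamma(x,y)\right)^{1/2}$ over couplings $\gamma$. For probability measures $\mu_{1},\mu_{2}$ on $\mathbb{R}^{d}$, $W_{2,1}(\mu_{1},\mu_{2})=\sup_{v\in\mathbb{R}^{d},\|v\|_{2}=1}W_{2}(v_{\#}\mu_{1},v_{\#}\mu_{2})$, where $v_{\#}\mu_{i}$ is the pushforward of $\mu_{i}$ under $x\mapsto\langle x,v\rangle$. $\delta_{x}$ is the Dirac mass at $x$. *)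

theory Defs
  imports "HOL-Probability.Probability"
begin

definition psd :: "real^'n^'n \<Rightarrow> bool" where
  "psd S \<longleftrightarrow> transpose S = S \<and> (\<forall>x. 0 \<le> x \<bullet> (S *v x))"

definition op_norm :: "real^'n^'n \<Rightarrow> real" where
  "op_norm S = onorm (\<lambda>x. S *v x)"

definition couplings :: "real measure \<Rightarrow> real measure \<Rightarrow> (real \<times> real) measure set" where
  "couplings \<nu>1 \<nu>2 = {\<gamma>. sets \<gamma> = sets borel \<and> prob_space \<gamma> \<and>
      distr \<gamma> borel fst = \<nu>1 \<and> distr \<gamma> borel snd = \<nu>2}"

definition W2_sq :: "real measure \<Rightarrow> real measure \<Rightarrow> ennreal" where
  "W2_sq \<nu>1 \<nu>2 = (INF \<gamma>\<in>couplings \<nu>1 \<nu>2. \<integral>\<^sup>+ p. ennreal ((fst p - snd p)\<^sup>2) \<partial>\<gamma>)"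

text \<open>Squared max-sliced Wasserstein distance: W_{2,1}^2 = sup over unit v of W_2^2 of projections.\<close>
definition W21_sq :: "('a::euclidean_space) measure \<Rightarrow> 'a measure \<Rightarrow> ennreal" where
  "W21_sq \<mu>1 \<mu>2 = (SUP v\<in>{v. norm v = 1}.
      W2_sq (distr \<mu>1 borel (\<lambda>x. x \<bullet> v)) (distr \<mu>2 borel (\<lambda>x. x \<bullet> v)))"

definition sym_empirical :: "(nat \<Rightarrow> 'a::real_vector) \<Rightarrow> nat \<Rightarrow> 'a measure" where
  "sym_empirical x n = measure_pmf (pmf_of_multiset
      (image_mset x (mset_set {..<n}) + image_mset (\<lambda>i. - x i) (mset_set {..<n})))"

definition symmetric_measure :: "('a::euclidean_space) measure \<Rightarrow> bool" where
  "symmetric_measure \<mu> \<longleftrightarrow> (\<forall>A\<in>sets borel. emeasure \<mu> A = emeasure \<mu> (uminus ` A))"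

end

theory Submission
  imports Defs
begin

text \<open>
  Let T = trace \<Sigma> and M = op_norm \<Sigma>. Split \<Sigma> = M u u^T + sum_k w_k w_k^T with u a unit top
  eigenvector and every w_k orthogonal to u. The measure \<mu> puts mass M/T on the antipodal pair
  \<plusminus>sqrt T u and mass |w_k|^2/T on \<plusminus>sqrt T w_k/|w_k|; it has covariance \<Sigma> and lives on the sphere
  of radius sqrt T.

  Projected onto u, both \<mu> and the symmetrised empirical measure live on {-sqrt T, 0, sqrt T},
  where W_2^2 dominates the difference of second moments. Hence W_{2,1}^2 \<ge> (T/n) |S|, where S is
  the number of samples on the spike minus its mean n M/T. Projected onto the direction of the
  first sample, W_{2,1}^2 \<ge> (2/7) T/n - (2/5) M. The second bound wins when n M/T is small;
  otherwise the second and fourth moments of S give E|S| \<ge> (9/16) \<sigma> - 1/(16 \<sigma>) with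
  \<sigma>^2 = Var S \<ge> n M/(2T), which is enough.
\<close>

section \<open>Quadratic forms of positive semidefinite matrices\<close>

definition quad_form :: "real^'n^'n \<Rightarrow> real^'n \<Rightarrow> real" where
  "quad_form S x = x \<bullet> (S *v x)"

definition outer_prod :: "real^'n \<Rightarrow> real^'n^'n" where
  "outer_prod w = (\<chi> i j. w$i * w$j)"

lemma quad_form_nonneg: "psd S \<Longrightarrow> 0 \<le> quad_form S x"
  by (simp add: psd_def quad_form_def)

lemma quad_form_scaleR: "quad_form S (c *\<^sub>R x) = c\<^sup>2 * quad_form S x"
  by (simp add: quad_form_def matrix_vector_mult_scaleR power2_eq_square)

lemma quad_form_axis: "quad_form S (axis i 1) = S$i$i"
  by (simp add: quad_form_def matrix_vector_mult_basis inner_commute[of "axis i 1"] inner_axis column_def)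

lemma quad_form_add: "quad_form (A + B) x = quad_form A x + quad_form B x"
  by (simp add: quad_form_def matrix_vector_mult_add_rdistrib inner_add_right)

lemma quad_form_diff: "quad_form (A - B) x = quad_form A x - quad_form B x"
  by (simp add: quad_form_def matrix_vector_mult_diff_rdistrib inner_diff_right)

lemma quad_form_scaleR_matrix: "quad_form (c *\<^sub>R A) x = c * quad_form A x"
  by (simp add: quad_form_def scaleR_matrix_vector_assoc[symmetric])

lemma quad_form_outer_prod: "quad_form (outer_prod w) x = (w \<bullet> x)\<^sup>2"
  by (simp add: quad_form_def outer_prod_def matrix_vector_mult_def inner_vec_def
      power2_eq_square sum_distrib_left sum_distrib_right mult_ac)

lemma quad_form_sum_list_outer_prod:
  "quad_form (sum_list (map outer_prod ws)) x = (\<Sum>w\<leftarrow>ws. (w \<bullet> x)\<^sup>2)"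
  by (induction ws)
    (simp_all add: quad_form_def matrix_vector_mult_add_rdistrib inner_add_right
      flip: quad_form_outer_prod)

lemma transpose_diff: "transpose (A - B) = transpose A - transpose (B :: 'a::ab_group_add^'n^'m)"
  by (simp add: transpose_def vec_eq_iff)

lemma transpose_outer_prod: "transpose (outer_prod w) = outer_prod w"
  by (simp add: outer_prod_def transpose_def vec_eq_iff mult.commute)

lemma trace_scaleR: "trace (c *\<^sub>R A) = c * trace A"
  by (simp add: trace_def sum_distrib_left)

lemma trace_outer_prod: "trace (outer_prod w) = (norm w)\<^sup>2"
  by (simp add: trace_def outer_prod_def power2_norm_eq_inner inner_vec_def)

lemma trace_sum_list_outer_prod: "trace (sum_list (map outer_prod ws)) = (\<Sum>w\<leftarrow>ws. (norm w)\<^sup>2)"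
  by (induction ws) (simp add: trace_def, simp add: trace_add trace_outer_prod)

lemma sum_list_outer_prod_nth: "sum_list (map outer_prod ws) $ i $ j = (\<Sum>w\<leftarrow>ws. w$i * w$j)"
  by (induction ws) (simp_all add: outer_prod_def)

lemma symmetric_matrix_inner_swap:
  fixes S :: "real^'n^'n"
  assumes "transpose S = S"
  shows "x \<bullet> (S *v y) = y \<bullet> (S *v x)"
  by (metis assms dot_lmul_matrix inner_commute vector_transpose_matrix)

lemma quad_form_add_scaleR:
  fixes S :: "real^'n^'n"
  assumes "transpose S = S"
  shows "quad_form S (x + t *\<^sub>R y) = quad_form S x + 2 * t * (x \<bullet> (S *v y)) + t\<^sup>2 * quad_form S y"
  using symmetric_matrix_inner_swap[OF assms, of y x]
  by (simp add: quad_form_def matrix_vector_right_distrib matrix_vector_mult_scaleR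
      inner_add_left inner_add_right algebra_simps power2_eq_square)

lemma nonneg_quadratic_imp_discrim_le:
  fixes a b c :: real
  assumes nonneg: "\<And>t. 0 \<le> a + 2 * t * b + t\<^sup>2 * c" and "0 \<le> c"
  shows "b\<^sup>2 \<le> a * c"
proof (cases "c = 0")
  case True
  have "b = 0"
  proof (rule ccontr)
    assume "b \<noteq> 0"
    then show False
      using nonneg[of "- (a + 1) / (2 * b)"] True by (simp add: field_simps)
  qed
  then show ?thesis using True by simp
next
  case False
  then have "0 < c" using \<open>0 \<le> c\<close> by simp
  have "0 \<le> a + 2 * (- b / c) * b + (- b / c)\<^sup>2 * c" by (rule nonneg)
  also have "\<dots> = a - b\<^sup>2 / c" using \<open>0 < c\<close> by (simp add: field_simps power2_eq_square)
  finally show ?thesis using \<open>0 < c\<close> by (simp add: field_simps)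
qed

lemma psd_cauchy_schwarz:
  assumes "psd S"
  shows "(x \<bullet> (S *v y))\<^sup>2 \<le> quad_form S x * quad_form S y"
proof (rule nonneg_quadratic_imp_discrim_le)
  show "0 \<le> quad_form S x + 2 * t * (x \<bullet> (S *v y)) + t\<^sup>2 * quad_form S y" for t
    using assms quad_form_nonneg[OF assms, of "x + t *\<^sub>R y"]
    by (simp add: psd_def quad_form_add_scaleR)
qed (rule quad_form_nonneg[OF assms])

lemma psd_diag_eq_0_imp_column_eq_0:
  assumes "psd S" "S$i$i = 0"
  shows "S$j$i = 0"
proof -
  have "(axis j 1 \<bullet> (S *v axis i 1))\<^sup>2 \<le> quad_form S (axis j 1) * quad_form S (axis i 1)"
    by (rule psd_cauchy_schwarz[OF assms(1)])
  then show ?thesis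
    using assms(2) by (simp add: quad_form_axis matrix_vector_mult_basis inner_axis' column_def)
qed

lemma quad_form_le_op_norm: "quad_form S x \<le> op_norm S * (norm x)\<^sup>2"
proof -
  have "quad_form S x \<le> norm x * norm (S *v x)"
    unfolding quad_form_def by (rule norm_cauchy_schwarz)
  also have "\<dots> \<le> norm x * (op_norm S * norm x)"
    unfolding op_norm_def
    by (intro mult_left_mono onorm[OF matrix_vector_mul_bounded_linear]) simp
  finally show ?thesis by (simp add: power2_eq_square mult_ac)
qed

lemma op_norm_pos_iff: "0 < op_norm S \<longleftrightarrow> S \<noteq> 0"
  unfolding op_norm_def onorm_pos_lt[OF matrix_vector_mul_bounded_linear]
  by (metis matrix_eq matrix_vector_mult_0)

lemma quad_form_attains_max_on_sphere:
  fixes S :: "real^'n^'n"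
  obtains u where "norm u = 1" "\<And>v. quad_form S v \<le> quad_form S u * (norm v)\<^sup>2"
proof -
  have "continuous_on (sphere 0 1) (quad_form S)"
    unfolding quad_form_def by (intro continuous_intros matrix_vector_mult_linear_continuous_on)
  then obtain u where u: "u \<in> sphere 0 1" and max: "\<And>v. v \<in> sphere 0 1 \<Longrightarrow> quad_form S v \<le> quad_form S u"
    using continuous_attains_sup[OF compact_sphere, of 0 1 "quad_form S"] by auto
  have "quad_form S v \<le> quad_form S u * (norm v)\<^sup>2" for v
  proof (cases "v = 0")
    case False
    then have "quad_form S ((1 / norm v) *\<^sub>R v) \<le> quad_form S u" by (intro max) simp
    with False show ?thesis by (simp add: quad_form_scaleR field_simps)
  qed (simp add: quad_form_def)
  with u that show ?thesis by simp
qed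

lemma max_quad_form_eigenvector:
  fixes S :: "real^'n^'n"
  assumes "psd S" "norm u = 1" and max: "\<And>v. quad_form S v \<le> quad_form S u * (norm v)\<^sup>2"
  shows "S *v u = quad_form S u *\<^sub>R u"
proof -
  have sym: "transpose S = S" using assms(1) by (simp add: psd_def)
  define M where "M = quad_form S u"
  have uu: "u \<bullet> u = 1" using assms(2) by (simp add: dot_square_norm)
  have stationary: "y \<bullet> (S *v u) = M * (u \<bullet> y)" for y
  proof -
    \<comment> \<open>t \<mapsto> M |u + t y|^2 - quad_form S (u + t y) is a nonnegative quadratic vanishing at 0\<close>
    have "(norm (u + t *\<^sub>R y))\<^sup>2 = 1 + 2 * t * (u \<bullet> y) + t\<^sup>2 * (norm y)\<^sup>2" for t
      unfolding power2_norm_eq_inner using uu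
      by (simp add: inner_add_left inner_add_right inner_commute algebra_simps power2_eq_square)
    then have "0 \<le> 0 + 2 * t * (M * (u \<bullet> y) - u \<bullet> (S *v y)) + t\<^sup>2 * (M * (norm y)\<^sup>2 - quad_form S y)" for t
      using max[of "u + t *\<^sub>R y"] quad_form_add_scaleR[OF sym, of u t y]
      by (simp add: M_def algebra_simps)
    then have "(M * (u \<bullet> y) - u \<bullet> (S *v y))\<^sup>2 \<le> 0 * (M * (norm y)\<^sup>2 - quad_form S y)"
      by (rule nonneg_quadratic_imp_discrim_le) (use max[of y] M_def in simp)
    then show ?thesis using symmetric_matrix_inner_swap[OF sym, of u y] by simp
  qed
  define y where "y = S *v u - M *\<^sub>R u"
  have "y \<bullet> y = 0"
    using stationary[of y] by (simp add: y_def inner_diff_right inner_commute right_diff_distrib)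
  then show ?thesis by (simp add: y_def M_def)
qed

lemma psd_norm_matrix_vector_le:
  fixes S :: "real^'n^'n"
  assumes "psd S" and bound: "\<And>v. quad_form S v \<le> M * (norm v)\<^sup>2"
  shows "norm (S *v x) \<le> M * norm x"
proof -
  have "0 \<le> M"
    using bound[of "axis undefined 1"] quad_form_nonneg[OF assms(1), of "axis undefined 1"]
    by (simp add: norm_axis_1)
  define y where "y = S *v x"
  have "((norm y)\<^sup>2)\<^sup>2 \<le> quad_form S y * quad_form S x"
    using psd_cauchy_schwarz[OF assms(1), of y x] by (simp add: y_def dot_square_norm)
  also have "\<dots> \<le> (M * (norm y)\<^sup>2) * (M * (norm x)\<^sup>2)"
    using \<open>0 \<le> M\<close> by (intro mult_mono bound quad_form_nonneg[OF assms(1)]) simp_all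
  finally have "(norm y)\<^sup>2 \<le> (M * norm x)\<^sup>2"
    by (cases "y = 0") (simp, simp add: power2_eq_square mult_ac)
  then show ?thesis using \<open>0 \<le> M\<close> by (simp add: y_def power2_le_iff_abs_le)
qed

lemma op_norm_eq_max_quad_form:
  fixes S :: "real^'n^'n"
  assumes "psd S" "norm u = 1" and max: "\<And>v. quad_form S v \<le> quad_form S u * (norm v)\<^sup>2"
  shows "op_norm S = quad_form S u"
proof (rule antisym)
  show "op_norm S \<le> quad_form S u"
    unfolding op_norm_def by (rule onorm_le) (rule psd_norm_matrix_vector_le[OF assms(1) max])
  show "quad_form S u \<le> op_norm S"
    using quad_form_le_op_norm[of S u] assms(2) by simp
qed

lemma psd_minus_outer_prod_eigenvector:
  fixes S :: "real^'n^'n"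
  assumes "psd S" "S *v u = M *\<^sub>R u" "norm u = 1"
  shows "psd (S - M *\<^sub>R outer_prod u)"
proof -
  have sym: "transpose S = S" using assms(1) by (simp add: psd_def)
  have uu: "u \<bullet> u = 1" using assms(3) by (simp add: dot_square_norm)
  have "0 \<le> quad_form S x - M * (u \<bullet> x)\<^sup>2" for x
  proof -
    define c where "c = u \<bullet> x"
    define y where "y = x - c *\<^sub>R u"
    have "y \<bullet> (S *v u) = 0"
      using assms(2) uu by (simp add: y_def c_def inner_diff_left inner_diff_right inner_commute)
    then have "quad_form S x = quad_form S y + c\<^sup>2 * M"
      using quad_form_add_scaleR[OF sym, of y c u] assms(2) uu
      by (simp add: y_def quad_form_def)
    then show ?thesis using quad_form_nonneg[OF assms(1), of y] by (simp add: c_def)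
  qed
  then show ?thesis
    using sym by (simp add: psd_def transpose_diff transpose_scalar transpose_outer_prod
        quad_form_diff quad_form_scaleR_matrix quad_form_outer_prod flip: quad_form_def)
qed

text \<open>One step of a symmetric Gaussian elimination. If C$i$i = 0 then w = 0, because
  division by zero yields 0, and the i-th row and column of C vanish already.\<close>

lemma psd_minus_outer_prod_column:
  fixes C :: "real^'n^'n" and i :: 'n
  assumes "psd C"
  defines "w \<equiv> (1 / sqrt (C$i$i)) *\<^sub>R column i C"
  shows "psd (C - outer_prod w)" and "(C - outer_prod w)$i$j = 0"
proof -
  have sym: "transpose C = C" using assms(1) by (simp add: psd_def)
  have C_swap: "C$j$i = C$i$j" for i j
    using arg_cong[OF sym, of "\<lambda>A. A$i$j"] by (simp add: transpose_def)
  have w: "w$j = C$j$i / sqrt (C$i$i)" for j by (simp add: w_def column_def)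
  have "(w \<bullet> x)\<^sup>2 \<le> quad_form C x" for x
  proof (cases "C$i$i = 0")
    case True
    then show ?thesis by (simp add: w_def quad_form_nonneg[OF assms(1)])
  next
    case False
    then have pos: "0 < C$i$i"
      using quad_form_nonneg[OF assms(1), of "axis i 1"] by (simp add: quad_form_axis)
    have "column i C \<bullet> x = (C *v x) $ i"
      by (simp add: column_def inner_vec_def matrix_vector_mult_def C_swap mult.commute)
    also have "\<dots> = axis i 1 \<bullet> (C *v x)" by (simp add: inner_axis')
    finally have "column i C \<bullet> x = axis i 1 \<bullet> (C *v x)" .
    then have "(column i C \<bullet> x)\<^sup>2 \<le> C$i$i * quad_form C x"
      using psd_cauchy_schwarz[OF assms(1), of "axis i 1" x] by (simp add: quad_form_axis)
    moreover have "(w \<bullet> x)\<^sup>2 = (column i C \<bullet> x)\<^sup>2 / C$i$i"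
      using pos by (simp add: w_def power_mult_distrib power_divide)
    ultimately show ?thesis
      using pos by (simp add: divide_le_eq mult.commute)
  qed
  then show "psd (C - outer_prod w)"
    using sym by (simp add: psd_def transpose_diff transpose_outer_prod quad_form_diff
        quad_form_outer_prod flip: quad_form_def)
  show "(C - outer_prod w)$i$j = 0"
  proof (cases "C$i$i = 0")
    case True
    then show ?thesis
      using psd_diag_eq_0_imp_column_eq_0[OF assms(1) True, of j]
      by (simp add: w_def C_swap outer_prod_def)
  next
    case False
    then have "0 < C$i$i"
      using quad_form_nonneg[OF assms(1), of "axis i 1"] by (simp add: quad_form_axis)
    then show ?thesis by (simp add: outer_prod_def w C_swap[of j i])
  qed
qed

lemma psd_eq_sum_outer_prods:
  fixes C :: "real^'n^'n"
  assumes "psd C"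
  obtains ws where "C = sum_list (map outer_prod ws)"
proof -
  have "\<exists>ws. C = sum_list (map outer_prod ws)"
    if "finite I" "psd C" "\<forall>a b. a \<notin> I \<longrightarrow> C$a$b = 0" for I and C :: "real^'n^'n"
    using that
  proof (induction I arbitrary: C rule: finite_induct)
    case empty
    then have "C = sum_list (map outer_prod [])" by (simp add: vec_eq_iff)
    then show ?case by blast
  next
    case (insert i I)
    define w where "w = (1 / sqrt (C$i$i)) *\<^sub>R column i C"
    have "psd (C - outer_prod w)"
      unfolding w_def by (rule psd_minus_outer_prod_column(1)[OF insert.prems(1)])
    moreover have "(C - outer_prod w)$a$b = 0" if "a \<notin> I" for a b
    proof (cases "a = i")
      case True
      show ?thesis
        unfolding w_def True by (rule psd_minus_outer_prod_column(2)[OF insert.prems(1)])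
    next
      case False
      then have "C$a$b = 0" "C$a$i = 0" using insert.prems(2) that by simp_all
      then show ?thesis by (simp add: w_def outer_prod_def column_def)
    qed
    ultimately obtain ws where "C - outer_prod w = sum_list (map outer_prod ws)"
      using insert.IH by blast
    then have "C = sum_list (map outer_prod (w # ws))"
      by (metis diff_add_cancel add.commute list.map(2) sum_list.Cons)
    then show ?case by blast
  qed
  from this[OF finite assms] show ?thesis using that by blast
qed

lemma psd_top_eigen_split:
  fixes S :: "real^'n^'n"
  assumes "psd S"
  obtains u ws where "norm u = 1"
    and "S = op_norm S *\<^sub>R outer_prod u + sum_list (map outer_prod ws)"
    and "\<forall>w\<in>set ws. w \<noteq> 0 \<and> w \<bullet> u = 0"
proof -
  obtain u where u: "norm u = 1" and max: "\<And>v. quad_form S v \<le> quad_form S u * (norm v)\<^sup>2"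
    using quad_form_attains_max_on_sphere[of S] by blast
  have M: "op_norm S = quad_form S u" by (rule op_norm_eq_max_quad_form[OF assms u max])
  have "psd (S - op_norm S *\<^sub>R outer_prod u)"
    unfolding M by (rule psd_minus_outer_prod_eigenvector[OF assms max_quad_form_eigenvector[OF assms u max] u])
  then obtain vs where vs: "S - op_norm S *\<^sub>R outer_prod u = sum_list (map outer_prod vs)"
    by (rule psd_eq_sum_outer_prods)
  define ws where "ws = filter (\<lambda>w. w \<noteq> 0) vs"
  have split: "S - op_norm S *\<^sub>R outer_prod u = sum_list (map outer_prod ws)"
    unfolding vs ws_def by (rule sum_list_map_filter[symmetric]) (simp add: outer_prod_def vec_eq_iff)
  have "(\<Sum>w\<leftarrow>ws. (w \<bullet> u)\<^sup>2) = quad_form (S - op_norm S *\<^sub>R outer_prod u) u"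
    by (simp add: split quad_form_sum_list_outer_prod)
  also have "\<dots> = 0"
    using u by (simp add: M quad_form_diff quad_form_scaleR_matrix quad_form_outer_prod dot_square_norm)
  finally have "\<forall>w\<in>set ws. w \<bullet> u = 0"
    by (subst (asm) sum_list_nonneg_eq_zero_iff) auto
  moreover have "S = op_norm S *\<^sub>R outer_prod u + sum_list (map outer_prod ws)"
    using split by (metis diff_add_cancel add.commute)
  ultimately show ?thesis by (intro that[OF u]) (auto simp: ws_def)
qed

section \<open>Finitely supported measures\<close>

lemma sum_mult_sum_list_filter:
  fixes f :: "'a \<Rightarrow> real"
  assumes "finite A" "fst ` set L \<subseteq> A"
  shows "(\<Sum>a\<in>A. f a * sum_list (map snd (filter (\<lambda>z. fst z = a) L))) = (\<Sum>(x, w)\<leftarrow>L. w * f x)"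
  using assms(2)
proof (induction L)
  case (Cons z L)
  obtain x w where z: "z = (x, w)" by (cases z)
  have "x \<in> A" using Cons.prems z by auto
  have "(\<Sum>a\<in>A. f a * sum_list (map snd (filter (\<lambda>z. fst z = a) (z # L))))
      = (\<Sum>a\<in>A. (if a = x then f a * w else 0) + f a * sum_list (map snd (filter (\<lambda>z. fst z = a) L)))"
    by (intro sum.cong) (auto simp: z algebra_simps)
  also have "\<dots> = f x * w + (\<Sum>(x, w)\<leftarrow>L. w * f x)"
    using Cons assms(1) \<open>x \<in> A\<close> by (simp add: sum.distrib)
  finally show ?case by (simp add: z mult.commute)
qed simp

lemma integral_pmf_of_list:
  fixes f :: "'a \<Rightarrow> real"
  assumes "pmf_of_list_wf L"
  shows "(\<integral>x. f x \<partial>measure_pmf (pmf_of_list L)) = (\<Sum>(x, w)\<leftarrow>L. w * f x)"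
proof -
  have "(\<integral>x. f x \<partial>measure_pmf (pmf_of_list L)) = (\<Sum>a\<in>fst ` set L. f a * pmf (pmf_of_list L) a)"
    using set_pmf_of_list[OF assms] by (intro integral_measure_pmf_real) auto
  also have "\<dots> = (\<Sum>(x, w)\<leftarrow>L. w * f x)"
    by (simp add: pmf_pmf_of_list[OF assms] sum_mult_sum_list_filter)
  finally show ?thesis .
qed

lemma sum_mult_count_eq_sum_mset:
  fixes f :: "'a \<Rightarrow> real"
  shows "(\<Sum>a\<in>set_mset M. f a * count M a) = (\<Sum>a\<in>#M. f a)"
proof (induction M)
  case (add x M)
  have "(\<Sum>a\<in>set_mset (add_mset x M). f a * count (add_mset x M) a)
      = (\<Sum>a\<in>insert x (set_mset M). f a * count M a + (if a = x then f x else 0))"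
    by (intro sum.cong) (auto simp: algebra_simps)
  also have "\<dots> = (\<Sum>a\<in>insert x (set_mset M). f a * count M a) + f x"
    by (simp add: sum.distrib)
  also have "(\<Sum>a\<in>insert x (set_mset M). f a * count M a) = (\<Sum>a\<in>set_mset M. f a * count M a)"
    by (cases "x \<in># M") (auto simp: insert_absorb not_in_iff)
  finally show ?case using add by simp
qed simp

lemma integral_pmf_of_multiset:
  fixes f :: "'a \<Rightarrow> real"
  assumes "M \<noteq> {#}"
  shows "(\<integral>x. f x \<partial>measure_pmf (pmf_of_multiset M)) = (\<Sum>a\<in>#M. f a) / size M"
proof -
  have "(\<integral>x. f x \<partial>measure_pmf (pmf_of_multiset M)) = (\<Sum>a\<in>set_mset M. f a * pmf (pmf_of_multiset M) a)"
    using assms by (intro integral_measure_pmf_real) auto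
  then show ?thesis
    using assms by (simp add: sum_divide_distrib[symmetric] sum_mult_count_eq_sum_mset)
qed

lemma image_uminus_eq_vimage: "uminus ` A = (\<lambda>x. - x) -` (A :: 'a::group_add set)"
  by (auto simp: image_iff) (metis minus_minus)

lemma uminus_image_borel:
  fixes A :: "'a::euclidean_space set"
  assumes "A \<in> sets borel"
  shows "uminus ` A \<in> sets borel"
proof -
  have "(\<lambda>x::'a. - x) \<in> borel_measurable borel" by measurable
  then show ?thesis using assms unfolding image_uminus_eq_vimage by (rule measurable_sets_borel)
qed

lemma symmetric_measure_return_0: "symmetric_measure (return borel (0::'a::euclidean_space))"
  by (auto simp: symmetric_measure_def uminus_image_borel indicator_def image_iff)

definition discrete_measure :: "('a::euclidean_space \<times> real) list \<Rightarrow> 'a measure" where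
  "discrete_measure L = distr (measure_pmf (pmf_of_list L)) borel (\<lambda>x. x)"

definition symmetrize :: "('a::uminus \<times> real) list \<Rightarrow> ('a \<times> real) list" where
  "symmetrize L = concat (map (\<lambda>(a, w). [(a, w / 2), (- a, w / 2)]) L)"

lemma sets_discrete_measure [simp, measurable_cong]: "sets (discrete_measure L) = sets borel"
  by (simp add: discrete_measure_def)

lemma prob_space_discrete_measure: "prob_space (discrete_measure L)"
  unfolding discrete_measure_def by (intro prob_space.prob_space_distr prob_space_measure_pmf) simp

lemma integral_discrete_measure:
  fixes f :: "'a::euclidean_space \<Rightarrow> real"
  assumes "pmf_of_list_wf L" "f \<in> borel_measurable borel"
  shows "(\<integral>x. f x \<partial>discrete_measure L) = (\<Sum>(x, w)\<leftarrow>L. w * f x)"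
  unfolding discrete_measure_def using assms by (simp add: integral_distr integral_pmf_of_list)

lemma integrable_discrete_measure:
  fixes f :: "'a::euclidean_space \<Rightarrow> real"
  assumes "pmf_of_list_wf L" "f \<in> borel_measurable borel"
  shows "integrable (discrete_measure L) f"
  unfolding discrete_measure_def using assms
  by (simp add: integrable_distr_eq integrable_measure_pmf_finite finite_set_pmf_of_list)

lemma AE_discrete_measure:
  assumes "pmf_of_list_wf L"
  shows "AE x in discrete_measure L. x \<in> fst ` set L"
proof -
  have "fst ` set L \<in> sets borel" by (simp add: finite_imp_closed borel_closed)
  then show ?thesis
    unfolding discrete_measure_def using set_pmf_of_list[OF assms]
    by (subst AE_distr_iff) (auto simp: AE_measure_pmf_iff)
qed

lemma set_symmetrize: "set (symmetrize L) = (\<Union>(a, w)\<in>set L. {(a, w / 2), (- a, w / 2)})"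
  unfolding symmetrize_def by (induction L) auto

lemma pmf_of_list_wf_symmetrize:
  assumes "pmf_of_list_wf L"
  shows "pmf_of_list_wf (symmetrize L)"
proof -
  have "sum_list (map snd (symmetrize L)) = sum_list (map snd L)"
    unfolding symmetrize_def by (induction L) auto
  then show ?thesis using assms by (auto simp: pmf_of_list_wf_def set_symmetrize)
qed

lemma sum_list_symmetrize:
  "(\<Sum>(x, w)\<leftarrow>symmetrize L. w * f x) = (\<Sum>(a, w)\<leftarrow>L. w / 2 * (f a + f (- a)))"
  unfolding symmetrize_def by (induction L) (auto simp: algebra_simps)

lemma integral_discrete_measure_symmetrize:
  fixes f :: "'a::euclidean_space \<Rightarrow> real"
  assumes "pmf_of_list_wf L" "f \<in> borel_measurable borel" and even: "\<And>x. f (- x) = f x"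
  shows "(\<integral>x. f x \<partial>discrete_measure (symmetrize L)) = (\<Sum>(a, w)\<leftarrow>L. w * f a)"
  using assms(1,2) by (simp add: integral_discrete_measure pmf_of_list_wf_symmetrize
      sum_list_symmetrize even case_prod_beta)

lemma symmetric_measure_discrete_measure_symmetrize:
  assumes "pmf_of_list_wf L"
  shows "symmetric_measure (discrete_measure (symmetrize L))"
  unfolding symmetric_measure_def
proof
  fix A :: "'a set" assume A: "A \<in> sets borel"
  interpret prob_space "discrete_measure (symmetrize L)" by (rule prob_space_discrete_measure)
  have "measure (discrete_measure (symmetrize L)) B = (\<Sum>(a, w)\<leftarrow>L. w / 2 * (indicator B a + indicator B (- a)))"
    if "B \<in> sets borel" for B :: "'a set"
    using integral_discrete_measure[OF pmf_of_list_wf_symmetrize[OF assms], of "indicator B"] that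
    by (simp add: sum_list_symmetrize)
  then show "emeasure (discrete_measure (symmetrize L)) A = emeasure (discrete_measure (symmetrize L)) (uminus ` A)"
    using A uminus_image_borel[OF A]
    by (simp add: emeasure_eq_measure image_uminus_eq_vimage indicator_def add.commute)
qed

definition sym_sample_mset :: "(nat \<Rightarrow> 'a::real_vector) \<Rightarrow> nat \<Rightarrow> 'a multiset" where
  "sym_sample_mset X n = image_mset X (mset_set {..<n}) + image_mset (\<lambda>i. - X i) (mset_set {..<n})"

lemma sym_empirical_eq: "sym_empirical X n = measure_pmf (pmf_of_multiset (sym_sample_mset X n))"
  by (simp add: sym_empirical_def sym_sample_mset_def)

lemma sym_sample_mset_nonempty: "0 < n \<Longrightarrow> sym_sample_mset X n \<noteq> {#}"
  by (auto simp: sym_sample_mset_def mset_set_empty_iff)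

lemma size_sym_sample_mset: "size (sym_sample_mset X n) = 2 * n"
  by (simp add: sym_sample_mset_def)

lemma set_mset_sym_sample_mset: "set_mset (sym_sample_mset X n) = X ` {..<n} \<union> (\<lambda>i. - X i) ` {..<n}"
  by (simp add: sym_sample_mset_def)

lemma sum_mset_sym_sample_mset: "(\<Sum>x\<in>#sym_sample_mset X n. f x) = (\<Sum>i<n. f (X i) + f (- X i))"
  by (simp add: sym_sample_mset_def sum_unfold_sum_mset multiset.map_comp comp_def sum_mset.distrib)

lemma integral_sym_empirical_proj:
  fixes X :: "nat \<Rightarrow> 'a::euclidean_space" and h :: "real \<Rightarrow> real"
  assumes "0 < n" "h \<in> borel_measurable borel" and even: "\<And>t. h (- t) = h t"
  shows "(\<integral>y. h y \<partial>distr (sym_empirical X n) borel (\<lambda>x. x \<bullet> v)) = (\<Sum>i<n. h (X i \<bullet> v)) / n"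
proof -
  have "(\<integral>y. h y \<partial>distr (sym_empirical X n) borel (\<lambda>x. x \<bullet> v)) = (\<integral>x. h (x \<bullet> v) \<partial>sym_empirical X n)"
    using assms(2) by (simp add: integral_distr sym_empirical_eq)
  also have "\<dots> = (2 * (\<Sum>i<n. h (X i \<bullet> v))) / (2 * n)"
    unfolding sym_empirical_eq integral_pmf_of_multiset[OF sym_sample_mset_nonempty[OF assms(1)]]
    by (simp add: size_sym_sample_mset sum_mset_sym_sample_mset even inner_minus_left
        flip: sum_distrib_left)
  finally show ?thesis by simp
qed

lemma integrable_sym_empirical_proj:
  fixes X :: "nat \<Rightarrow> 'a::euclidean_space" and h :: "real \<Rightarrow> real"
  assumes "0 < n" "h \<in> borel_measurable borel"
  shows "integrable (distr (sym_empirical X n) borel (\<lambda>x. x \<bullet> v)) h"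
proof -
  have "integrable (sym_empirical X n) (\<lambda>x. h (x \<bullet> v))"
    unfolding sym_empirical_eq
    by (auto intro!: integrable_measure_pmf_finite simp: sym_sample_mset_nonempty[OF assms(1)])
  then show ?thesis using assms(2) by (simp add: sym_empirical_eq integrable_distr_eq)
qed

lemma AE_sym_empirical_proj:
  fixes X :: "nat \<Rightarrow> 'a::euclidean_space"
  assumes "0 < n"
  shows "AE y in distr (sym_empirical X n) borel (\<lambda>x. x \<bullet> v). \<exists>i<n. y = X i \<bullet> v \<or> y = - (X i \<bullet> v)"
proof -
  have "{y. \<exists>i<n. y = X i \<bullet> v \<or> y = - (X i \<bullet> v)} \<in> sets borel"
    by (intro borel_closed finite_imp_closed) auto
  then show ?thesis
    unfolding sym_empirical_eq
    by (subst AE_distr_iff)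
      (auto simp: AE_measure_pmf_iff set_mset_sym_sample_mset sym_sample_mset_nonempty[OF assms(1)])
qed

section \<open>Lower bounds for the squared Wasserstein distance\<close>

lemma W2_sq_ge_integral_diff:
  fixes \<nu>1 \<nu>2 :: "real measure" and g h :: "real \<Rightarrow> real"
  assumes "AE x in \<nu>1. x \<in> A" "AE y in \<nu>2. y \<in> B"
    and "integrable \<nu>1 g" "integrable \<nu>2 h"
    and g: "g \<in> borel_measurable borel" and h: "h \<in> borel_measurable borel"
    and dual: "\<And>x y. x \<in> A \<Longrightarrow> y \<in> B \<Longrightarrow> g x - h y \<le> (x - y)\<^sup>2"
  shows "ennreal ((\<integral>x. g x \<partial>\<nu>1) - (\<integral>y. h y \<partial>\<nu>2)) \<le> W2_sq \<nu>1 \<nu>2"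
  unfolding W2_sq_def
proof (rule INF_greatest)
  fix \<gamma> assume "\<gamma> \<in> couplings \<nu>1 \<nu>2"
  then have sets: "sets \<gamma> = sets borel" and "prob_space \<gamma>"
    and marg1: "distr \<gamma> borel fst = \<nu>1" and marg2: "distr \<gamma> borel snd = \<nu>2"
    by (auto simp: couplings_def)
  interpret prob_space \<gamma> by fact
  have fst: "fst \<in> measurable \<gamma> borel" and snd: "snd \<in> measurable \<gamma> borel"
    unfolding measurable_cong_sets[OF sets refl]
    by (intro borel_measurable_continuous_onI continuous_intros)+
  have int_g: "integrable \<gamma> (\<lambda>p. g (fst p))" and int_h: "integrable \<gamma> (\<lambda>p. h (snd p))"
    using assms(3,4) by (simp_all add: integrable_distr_eq[OF fst g] integrable_distr_eq[OF snd h]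
        flip: marg1 marg2)
  have "AE p in \<gamma>. fst p \<in> A"
    using assms(1) unfolding marg1[symmetric] by (rule AE_distrD[OF fst])
  moreover have "AE p in \<gamma>. snd p \<in> B"
    using assms(2) unfolding marg2[symmetric] by (rule AE_distrD[OF snd])
  ultimately have AE_dual: "AE p in \<gamma>. g (fst p) - h (snd p) \<le> (fst p - snd p)\<^sup>2"
    by eventually_elim (rule dual)
  define F where "F p = max 0 (g (fst p) - h (snd p))" for p
  have int_F: "integrable \<gamma> F"
    unfolding F_def by (intro integrable_max integrable_zero Bochner_Integration.integrable_diff int_g int_h)
  have "(\<integral>x. g x \<partial>\<nu>1) - (\<integral>y. h y \<partial>\<nu>2) = (\<integral>p. g (fst p) - h (snd p) \<partial>\<gamma>)"
    using int_g int_h by (simp add: integral_distr[OF fst g] integral_distr[OF snd h] flip: marg1 marg2)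
  also have "\<dots> \<le> (\<integral>p. F p \<partial>\<gamma>)"
    by (intro integral_mono Bochner_Integration.integrable_diff int_g int_h int_F) (simp add: F_def)
  finally have "ennreal ((\<integral>x. g x \<partial>\<nu>1) - (\<integral>y. h y \<partial>\<nu>2)) \<le> ennreal (\<integral>p. F p \<partial>\<gamma>)"
    by (rule ennreal_leI)
  also have "\<dots> = (\<integral>\<^sup>+p. ennreal (F p) \<partial>\<gamma>)"
    using int_F by (rule nn_integral_eq_integral[symmetric]) (simp add: F_def)
  also have "\<dots> \<le> (\<integral>\<^sup>+p. ennreal ((fst p - snd p)\<^sup>2) \<partial>\<gamma>)"
    using AE_dual by (intro nn_integral_mono_AE) (auto elim!: eventually_mono simp: F_def intro: ennreal_leI)
  finally show "ennreal ((\<integral>x. g x \<partial>\<nu>1) - (\<integral>y. h y \<partial>\<nu>2)) \<le> (\<integral>\<^sup>+p. ennreal ((fst p - snd p)\<^sup>2) \<partial>\<gamma>)" .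
qed

lemma W2_sq_ge_abs_diff_second_moments:
  fixes \<nu>1 \<nu>2 :: "real measure"
  assumes "AE x in \<nu>1. x \<in> {- r, 0, r}" "AE y in \<nu>2. y \<in> {- r, 0, r}"
    and "integrable \<nu>1 (\<lambda>x. x\<^sup>2)" "integrable \<nu>2 (\<lambda>x. x\<^sup>2)"
  shows "ennreal \<bar>(\<integral>x. x\<^sup>2 \<partial>\<nu>1) - (\<integral>y. y\<^sup>2 \<partial>\<nu>2)\<bar> \<le> W2_sq \<nu>1 \<nu>2"
proof -
  \<comment> \<open>|x^2 - y^2| \<le> (x - y)^2 holds on {-r, 0, r} but not for general reals\<close>
  have pts: "x\<^sup>2 - y\<^sup>2 \<le> (x - y)\<^sup>2" "- x\<^sup>2 - - y\<^sup>2 \<le> (x - y)\<^sup>2"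
    if "x \<in> {- r, 0, r}" "y \<in> {- r, 0, r}" for x y
    using that by (auto simp: power2_eq_square)
  have "ennreal ((\<integral>x. x\<^sup>2 \<partial>\<nu>1) - (\<integral>y. y\<^sup>2 \<partial>\<nu>2)) \<le> W2_sq \<nu>1 \<nu>2"
    by (rule W2_sq_ge_integral_diff[OF assms]) (simp_all add: pts)
  moreover have "ennreal ((\<integral>x. - x\<^sup>2 \<partial>\<nu>1) - (\<integral>y. - y\<^sup>2 \<partial>\<nu>2)) \<le> W2_sq \<nu>1 \<nu>2"
    by (rule W2_sq_ge_integral_diff[OF assms(1,2)]) (use assms(3,4) pts in simp_all)
  ultimately show ?thesis by (simp add: abs_if)
qed

lemma W2_sq_ge_second_moments:
  fixes \<nu>1 \<nu>2 :: "real measure"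
  assumes "integrable \<nu>1 (\<lambda>x. x\<^sup>2)" "integrable \<nu>2 (\<lambda>x. x\<^sup>2)"
  shows "ennreal (2 / 7 * (\<integral>y. y\<^sup>2 \<partial>\<nu>2) - 2 / 5 * (\<integral>x. x\<^sup>2 \<partial>\<nu>1)) \<le> W2_sq \<nu>1 \<nu>2"
proof -
  have "- (2 / 5) * x\<^sup>2 - - (2 / 7) * y\<^sup>2 \<le> (x - y)\<^sup>2" for x y :: real
    using zero_le_power2[of "7 * x - 5 * y"] by (simp add: power2_eq_square algebra_simps)
  then have "ennreal ((\<integral>x. - (2 / 5) * x\<^sup>2 \<partial>\<nu>1) - (\<integral>y. - (2 / 7) * y\<^sup>2 \<partial>\<nu>2)) \<le> W2_sq \<nu>1 \<nu>2"
    using assms by (intro W2_sq_ge_integral_diff[where A = UNIV and B = UNIV]) auto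
  then show ?thesis by simp
qed

lemma W2_sq_proj_le_W21_sq:
  fixes \<mu>1 \<mu>2 :: "'a::euclidean_space measure"
  assumes "norm v = 1"
  shows "W2_sq (distr \<mu>1 borel (\<lambda>x. x \<bullet> v)) (distr \<mu>2 borel (\<lambda>x. x \<bullet> v)) \<le> W21_sq \<mu>1 \<mu>2"
  unfolding W21_sq_def using assms by (intro SUP_upper) simp

section \<open>Moments of sums of independent bounded variables\<close>

locale centered_bounded_rv = prob_space M for M :: "'a measure" +
  fixes f :: "'a \<Rightarrow> real" and B :: real
  assumes measurable_f [measurable]: "f \<in> borel_measurable M"
    and abs_f_le: "\<And>x. x \<in> space M \<Longrightarrow> \<bar>f x\<bar> \<le> B"
    and integral_f: "(\<integral>x. f x \<partial>M) = 0"
begin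

lemma integrable_f_power: "integrable M (\<lambda>x. f x ^ k)"
proof (rule integrable_const_bound[where B = "\<bar>B\<bar> ^ k"])
  show "AE x in M. norm (f x ^ k) \<le> \<bar>B\<bar> ^ k"
    by (intro AE_I2) (auto simp: power_abs intro!: power_mono order_trans[OF abs_f_le abs_ge_self])
qed measurable

lemma prob_space_PiM_iid: "prob_space (PiM I (\<lambda>_. M))"
  by (intro prob_space_PiM prob_space_axioms)

lemma integrable_PiM_sum_power:
  fixes n :: nat
  shows "integrable (PiM {..<n} (\<lambda>_. M)) (\<lambda>X. (\<Sum>i<n. f (X i)) ^ k)"
proof -
  interpret P: prob_space "PiM {..<n} (\<lambda>_. M)" by (rule prob_space_PiM_iid)
  have bound: "\<bar>\<Sum>i<n. f (X i)\<bar> \<le> real n * B" if "X \<in> space (PiM {..<n} (\<lambda>_. M))" for X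
  proof -
    have "\<bar>\<Sum>i<n. f (X i)\<bar> \<le> (\<Sum>i<n. \<bar>f (X i)\<bar>)" by (rule sum_abs)
    also have "\<dots> \<le> (\<Sum>i<n. B)"
      using that by (intro sum_mono abs_f_le) (auto simp: space_PiM PiE_iff)
    finally show ?thesis by simp
  qed
  then show ?thesis
    by (intro P.integrable_const_bound[where B = "\<bar>real n * B\<bar> ^ k"] AE_I2)
      (auto simp: power_abs intro!: power_mono order_trans[OF bound abs_ge_self])
qed

lemma integral_PiM_sum_Suc_power:
  fixes n :: nat
  shows "(\<integral>X. (\<Sum>i<Suc n. f (X i)) ^ k \<partial>PiM {..<Suc n} (\<lambda>_. M))
    = (\<Sum>j\<le>k. real (k choose j) * (\<integral>y. f y ^ j \<partial>M) * (\<integral>X. (\<Sum>i<n. f (X i)) ^ (k - j) \<partial>PiM {..<n} (\<lambda>_. M)))"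
    (is "_ = ?rhs")
proof -
  interpret product_prob_space "\<lambda>_::nat. M" by unfold_locales
  let ?S = "\<lambda>X. \<Sum>i<n. f (X i)"
  have "{..<Suc n} = insert n {..<n}" by auto
  then have "(\<integral>X. (\<Sum>i<Suc n. f (X i)) ^ k \<partial>PiM {..<Suc n} (\<lambda>_. M))
      = (\<integral>X. (\<integral>y. (\<Sum>i<Suc n. f ((X(n := y)) i)) ^ k \<partial>M) \<partial>PiM {..<n} (\<lambda>_. M))"
    using integrable_PiM_sum_power[of "Suc n" k] by (simp add: product_integral_insert)
  also have "\<dots> = (\<integral>X. (\<integral>y. (f y + ?S X) ^ k \<partial>M) \<partial>PiM {..<n} (\<lambda>_. M))"
    by (intro Bochner_Integration.integral_cong refl arg_cong2[where f = power] sum.cong) auto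
  also have "\<dots> = (\<integral>X. (\<Sum>j\<le>k. real (k choose j) * (\<integral>y. f y ^ j \<partial>M) * ?S X ^ (k - j)) \<partial>PiM {..<n} (\<lambda>_. M))"
  proof (intro Bochner_Integration.integral_cong refl)
    fix X
    have "(f y + ?S X) ^ k = (\<Sum>j\<le>k. f y ^ j * (real (k choose j) * ?S X ^ (k - j)))" for y
      unfolding binomial_ring by (intro sum.cong refl) simp
    then have "(\<integral>y. (f y + ?S X) ^ k \<partial>M) = (\<Sum>j\<le>k. (\<integral>y. f y ^ j \<partial>M) * (real (k choose j) * ?S X ^ (k - j)))"
      by (simp add: integrable_f_power)
    then show "(\<integral>y. (f y + ?S X) ^ k \<partial>M) = (\<Sum>j\<le>k. real (k choose j) * (\<integral>y. f y ^ j \<partial>M) * ?S X ^ (k - j))"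
      by (simp add: mult_ac)
  qed
  also have "\<dots> = ?rhs"
    by (simp add: integrable_PiM_sum_power mult_ac)
  finally show ?thesis .
qed

lemma integral_PiM_sum:
  fixes n :: nat
  shows "(\<integral>X. (\<Sum>i<n. f (X i)) \<partial>PiM {..<n} (\<lambda>_. M)) = 0"
proof (induction n)
  case (Suc n)
  interpret P: prob_space "PiM {..<n} (\<lambda>_. M)" by (rule prob_space_PiM_iid)
  show ?case
    using integral_PiM_sum_Suc_power[of n 1] by (simp add: Suc.IH integral_f)
qed simp

lemma integral_PiM_sum_power2:
  fixes n :: nat
  shows "(\<integral>X. (\<Sum>i<n. f (X i))\<^sup>2 \<partial>PiM {..<n} (\<lambda>_. M)) = n * (\<integral>x. (f x)\<^sup>2 \<partial>M)"
proof (induction n)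
  case (Suc n)
  interpret P: prob_space "PiM {..<n} (\<lambda>_. M)" by (rule prob_space_PiM_iid)
  have "{..2::nat} = {0, 1, 2}" by auto
  then show ?case
    using integral_PiM_sum_Suc_power[of n 2]
    by (simp add: Suc.IH integral_f integral_PiM_sum P.prob_space prob_space algebra_simps)
qed simp

lemma integral_PiM_sum_power4:
  fixes n :: nat
  shows "(\<integral>X. (\<Sum>i<n. f (X i)) ^ 4 \<partial>PiM {..<n} (\<lambda>_. M))
    = n * (\<integral>x. f x ^ 4 \<partial>M) + 3 * n * (real n - 1) * (\<integral>x. (f x)\<^sup>2 \<partial>M)\<^sup>2"
proof (induction n)
  case (Suc n)
  interpret P: prob_space "PiM {..<n} (\<lambda>_. M)" by (rule prob_space_PiM_iid)
  have "{..4::nat} = {0, 1, 2, 3, 4}" by auto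
  moreover have "(4::nat) choose 2 = 6" "(4::nat) choose 3 = 4" by (simp_all add: numeral_eq_Suc)
  ultimately show ?case
    using integral_PiM_sum_Suc_power[of n 4] integral_PiM_sum_power2[of n]
    by (simp add: Suc.IH integral_f integral_PiM_sum P.prob_space prob_space algebra_simps
        power2_eq_square)
qed simp

end

lemma abs_ge_quartic_minorant:
  fixes \<sigma> y :: real
  assumes "0 < \<sigma>"
  shows "3 / (4 * \<sigma>) * y\<^sup>2 - 1 / (16 * \<sigma> ^ 3) * y ^ 4 \<le> \<bar>y\<bar>"
proof -
  define a where "a = \<bar>y\<bar>"
  have "0 \<le> a * (a - 2 * \<sigma>)\<^sup>2 * (a + 4 * \<sigma>)" using assms by (simp add: a_def)
  also have "\<dots> = 16 * \<sigma> ^ 3 * a - (12 * \<sigma>\<^sup>2 * a\<^sup>2 - a ^ 4)"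
    by (simp add: power2_eq_square power3_eq_cube power4_eq_xxxx algebra_simps)
  finally have "12 * \<sigma>\<^sup>2 * y\<^sup>2 - y ^ 4 \<le> 16 * \<sigma> ^ 3 * \<bar>y\<bar>"
    by (simp add: a_def power2_abs power4_eq_xxxx flip: power2_eq_square)
  then show ?thesis
    using assms by (simp add: field_simps power2_eq_square power3_eq_cube)
qed

lemma integral_abs_ge_of_moments:
  fixes Y :: "'a \<Rightarrow> real"
  assumes "integrable N (\<lambda>x. (Y x)\<^sup>2)" "integrable N (\<lambda>x. Y x ^ 4)" "integrable N (\<lambda>x. \<bar>Y x\<bar>)"
    and "0 < \<sigma>" "(\<integral>x. (Y x)\<^sup>2 \<partial>N) = \<sigma>\<^sup>2" "(\<integral>x. Y x ^ 4 \<partial>N) \<le> \<sigma>\<^sup>2 + 3 * \<sigma> ^ 4"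
  shows "9 / 16 * \<sigma> - 1 / (16 * \<sigma>) \<le> (\<integral>x. \<bar>Y x\<bar> \<partial>N)"
proof -
  have "9 / 16 * \<sigma> - 1 / (16 * \<sigma>) = 3 / (4 * \<sigma>) * \<sigma>\<^sup>2 - 1 / (16 * \<sigma> ^ 3) * (\<sigma>\<^sup>2 + 3 * \<sigma> ^ 4)"
    using assms(4) by (simp add: field_simps) algebra
  also have "\<dots> \<le> 3 / (4 * \<sigma>) * (\<integral>x. (Y x)\<^sup>2 \<partial>N) - 1 / (16 * \<sigma> ^ 3) * (\<integral>x. Y x ^ 4 \<partial>N)"
    using assms(4-6) by (simp add: divide_right_mono)
  also have "\<dots> = (\<integral>x. 3 / (4 * \<sigma>) * (Y x)\<^sup>2 - 1 / (16 * \<sigma> ^ 3) * Y x ^ 4 \<partial>N)"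
    using assms(1,2) by simp
  also have "\<dots> \<le> (\<integral>x. \<bar>Y x\<bar> \<partial>N)"
    using assms(1-4) by (intro integral_mono abs_ge_quartic_minorant) auto
  finally show ?thesis .
qed

lemma ennreal_max_integral_le_nn_integral:
  fixes f :: "'a \<Rightarrow> real"
  assumes "prob_space P" "integrable P f" "\<And>x. 0 \<le> f x"
  shows "ennreal (max (\<integral>x. f x \<partial>P) c) \<le> (\<integral>\<^sup>+x. ennreal (max (f x) c) \<partial>P)"
proof -
  interpret prob_space P by fact
  have "ennreal (\<integral>x. f x \<partial>P) = (\<integral>\<^sup>+x. ennreal (f x) \<partial>P)"
    using assms(2,3) by (simp add: nn_integral_eq_integral)
  also have "\<dots> \<le> (\<integral>\<^sup>+x. ennreal (max (f x) c) \<partial>P)"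
    by (intro nn_integral_mono ennreal_leI) simp
  finally have "ennreal (\<integral>x. f x \<partial>P) \<le> (\<integral>\<^sup>+x. ennreal (max (f x) c) \<partial>P)" .
  moreover have "ennreal c \<le> (\<integral>\<^sup>+x. ennreal (max (f x) c) \<partial>P)"
  proof -
    have "ennreal c = (\<integral>\<^sup>+x. ennreal c \<partial>P)" by (simp add: emeasure_space_1)
    also have "\<dots> \<le> (\<integral>\<^sup>+x. ennreal (max (f x) c) \<partial>P)"
      by (intro nn_integral_mono ennreal_leI) simp
    finally show ?thesis .
  qed
  ultimately show ?thesis
    unfolding max_def[of "\<integral>x. f x \<partial>P" c] by simp
qed

lemma lower_bound_rescale:
  fixes n :: nat and M T :: real
  assumes "0 < n" "0 < M" "0 < T"
  shows "1 / 16 * M * (T / (n * M) + sqrt (T / (n * M))) = T / n * ((1 + sqrt (n * M / T)) / 16)"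
proof -
  define s where "s = n * M / T"
  have "0 < s" "T / n * s = M" "T / (n * M) = 1 / s" using assms by (simp_all add: s_def)
  have "M * sqrt (1 / s) = T / n * (s / sqrt s)"
    by (simp add: \<open>T / n * s = M\<close>[symmetric] real_sqrt_divide)
  also have "s / sqrt s = sqrt s" using \<open>0 < s\<close> by (simp add: real_div_sqrt)
  finally have M_sqrt: "M * sqrt (1 / s) = T / n * sqrt s" .
  have M_inv: "M * (1 / s) = T / n" using \<open>T / n * s = M\<close> \<open>0 < s\<close> by (auto simp: field_simps)
  have "1 / 16 * M * (T / (n * M) + sqrt (T / (n * M))) = (M * (1 / s) + M * sqrt (1 / s)) / 16"
    unfolding \<open>T / (n * M) = 1 / s\<close> by (simp only: distrib_left) simp
  also have "\<dots> = T / n * ((1 + sqrt s) / 16)"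
    unfolding M_inv M_sqrt using assms(1) by (simp add: field_simps)
  finally show ?thesis by (simp add: s_def)
qed

lemma one_plus_sqrt_le_max:
  fixes s \<sigma> :: real
  assumes "0 \<le> s" "0 < \<sigma>" "s / 2 \<le> \<sigma>\<^sup>2"
  shows "(1 + sqrt s) / 16 \<le> max (2 / 7 - 2 / 5 * s) (9 / 16 * \<sigma> - 1 / (16 * \<sigma>))"
proof (cases "s < 169 / 400")
  case True
  have "sqrt s < sqrt (169 / 400)" using True by (simp only: real_sqrt_less_iff)
  also have "sqrt (169 / 400) = (13 / 20 :: real)"
    by (rule real_sqrt_unique) (simp_all add: power2_eq_square)
  finally have "(1 + sqrt s) / 16 \<le> 2 / 7 - 2 / 5 * s" using True by (simp add: field_simps)
  then show ?thesis by (rule max.coboundedI1)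
next
  case False
  have s_le: "s \<le> 2 * \<sigma>\<^sup>2" using assms(3) by simp
  have sqrt_le: "sqrt s \<le> 3 / 2 * \<sigma>"
  proof (rule real_le_lsqrt)
    have "(3 / 2 * \<sigma>)\<^sup>2 = 9 / 4 * \<sigma>\<^sup>2" by (simp add: power2_eq_square)
    then show "s \<le> (3 / 2 * \<sigma>)\<^sup>2" using s_le zero_le_power2[of \<sigma>] by linarith
  qed (use assms(2) in simp)
  have "(9 / 20)\<^sup>2 \<le> \<sigma>\<^sup>2" using s_le False by (simp add: power_divide)
  then have "9 / 20 \<le> \<sigma>" by (rule power2_le_imp_le) (use assms(2) in simp)
  then have "0 \<le> (\<sigma> - 9 / 20) * (15 / 2 * \<sigma> + 19 / 8)" using assms(2) by simp
  then have "\<sigma> + 1 \<le> 15 / 2 * \<sigma>\<^sup>2" by (simp add: algebra_simps power2_eq_square)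
  moreover have "\<sigma> * sqrt s \<le> 3 / 2 * \<sigma>\<^sup>2"
    using mult_left_mono[OF sqrt_le, of \<sigma>] assms(2) by (simp add: power2_eq_square)
  ultimately have "\<sigma> * (1 + sqrt s) \<le> 9 * \<sigma>\<^sup>2 - 1" by (simp add: algebra_simps)
  then have "(1 + sqrt s) / 16 \<le> 9 / 16 * \<sigma> - 1 / (16 * \<sigma>)"
    using assms(2) by (simp add: field_simps power2_eq_square)
  then show ?thesis by (rule max.coboundedI2)
qed

section \<open>The hard instance\<close>

locale spiked_split =
  fixes \<Sigma> :: "real^'d^'d" and u :: "real^'d" and ws :: "(real^'d) list"
  assumes norm_u: "norm u = 1"
    and split: "\<Sigma> = op_norm \<Sigma> *\<^sub>R outer_prod u + sum_list (map outer_prod ws)"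
    and ws_nonzero: "\<forall>w\<in>set ws. w \<noteq> 0"
    and ws_orthogonal: "\<forall>w\<in>set ws. w \<bullet> u = 0"
    and op_norm_pos: "0 < op_norm \<Sigma>"
    and op_norm_le_half_trace: "op_norm \<Sigma> \<le> trace \<Sigma> / 2"
begin

abbreviation "M \<equiv> op_norm \<Sigma>"
abbreviation "T \<equiv> trace \<Sigma>"
abbreviation "r \<equiv> sqrt T"

lemma trace_pos: "0 < T"
  using op_norm_pos op_norm_le_half_trace by linarith

lemma r_squared: "r\<^sup>2 = T"
  using trace_pos by simp

lemma sum_list_norm_ws: "(\<Sum>w\<leftarrow>ws. (norm w)\<^sup>2) = T - M"
  using arg_cong[OF split, of trace] norm_u
  by (simp add: trace_add trace_scaleR trace_outer_prod trace_sum_list_outer_prod)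

lemma quad_form_split: "quad_form \<Sigma> v = M * (u \<bullet> v)\<^sup>2 + (\<Sum>w\<leftarrow>ws. (w \<bullet> v)\<^sup>2)"
  by (subst split) (simp add: quad_form_add quad_form_scaleR_matrix quad_form_outer_prod
      quad_form_sum_list_outer_prod)

definition spike_atoms :: "((real^'d) \<times> real) list" where
  "spike_atoms = (r *\<^sub>R u, M / T) # map (\<lambda>w. ((r / norm w) *\<^sub>R w, (norm w)\<^sup>2 / T)) ws"

definition \<mu> :: "(real^'d) measure" where
  "\<mu> = discrete_measure (symmetrize spike_atoms)"

lemma pmf_of_list_wf_spike_atoms: "pmf_of_list_wf spike_atoms"
proof (rule pmf_of_list_wfI)
  have "sum_list (map snd spike_atoms) = M / T + (T - M) / T"
    by (simp add: spike_atoms_def comp_def divide_inverse sum_list_mult_const sum_list_norm_ws)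
  then show "sum_list (map snd spike_atoms) = 1"
    using trace_pos by (simp add: field_simps)
qed (use trace_pos op_norm_pos in \<open>auto simp: spike_atoms_def\<close>)

lemma prob_space_\<mu>: "prob_space \<mu>"
  by (simp add: \<mu>_def prob_space_discrete_measure)

lemma sets_\<mu> [measurable_cong]: "sets \<mu> = sets borel"
  by (simp add: \<mu>_def)

lemma symmetric_measure_\<mu>: "symmetric_measure \<mu>"
  unfolding \<mu>_def by (rule symmetric_measure_discrete_measure_symmetrize[OF pmf_of_list_wf_spike_atoms])

lemma integrable_\<mu>:
  fixes f :: "real^'d \<Rightarrow> real"
  shows "f \<in> borel_measurable borel \<Longrightarrow> integrable \<mu> f"
  unfolding \<mu>_def
  by (rule integrable_discrete_measure[OF pmf_of_list_wf_symmetrize[OF pmf_of_list_wf_spike_atoms]])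

lemma integral_\<mu>_even:
  assumes "f \<in> borel_measurable borel" "\<And>x. f (- x) = f x"
  shows "(\<integral>x. f x \<partial>\<mu>) = M / T * f (r *\<^sub>R u) + (\<Sum>w\<leftarrow>ws. (norm w)\<^sup>2 / T * f ((r / norm w) *\<^sub>R w))"
  unfolding \<mu>_def integral_discrete_measure_symmetrize[OF pmf_of_list_wf_spike_atoms assms]
  by (simp add: spike_atoms_def comp_def)

lemma integral_\<mu>_quadratic:
  assumes "f \<in> borel_measurable borel" and homogeneous: "\<And>c x. f (c *\<^sub>R x) = c\<^sup>2 * f x"
  shows "(\<integral>x. f x \<partial>\<mu>) = M * f u + (\<Sum>w\<leftarrow>ws. f w)"
proof -
  have "f (- x) = f x" for x using homogeneous[of "- 1" x] by simp
  then have "(\<integral>x. f x \<partial>\<mu>) = M / T * f (r *\<^sub>R u) + (\<Sum>w\<leftarrow>ws. (norm w)\<^sup>2 / T * f ((r / norm w) *\<^sub>R w))"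
    by (rule integral_\<mu>_even[OF assms(1)])
  also have "M / T * f (r *\<^sub>R u) = M * f u"
    using trace_pos by (simp add: homogeneous)
  also have "(\<Sum>w\<leftarrow>ws. (norm w)\<^sup>2 / T * f ((r / norm w) *\<^sub>R w)) = (\<Sum>w\<leftarrow>ws. f w)"
    using ws_nonzero trace_pos
    by (intro arg_cong[where f = sum_list] map_cong) (auto simp: homogeneous power_divide)
  finally show ?thesis .
qed

lemma integral_\<mu>_covariance: "(\<integral>x. x $ i * x $ j \<partial>\<mu>) = \<Sigma> $ i $ j"
proof -
  have "(\<integral>x. x $ i * x $ j \<partial>\<mu>) = M * (u $ i * u $ j) + (\<Sum>w\<leftarrow>ws. w $ i * w $ j)"
    by (rule integral_\<mu>_quadratic) (simp_all add: power2_eq_square)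
  also have "\<dots> = \<Sigma> $ i $ j"
    by (subst (2) split) (simp add: outer_prod_def sum_list_outer_prod_nth)
  finally show ?thesis .
qed

lemma integral_\<mu>_inner_power2: "(\<integral>x. (x \<bullet> v)\<^sup>2 \<partial>\<mu>) = quad_form \<Sigma> v"
  by (subst integral_\<mu>_quadratic) (simp_all add: quad_form_split power_mult_distrib inner_commute)

lemma quad_form_u: "quad_form \<Sigma> u = M"
  using norm_u ws_orthogonal by (simp add: quad_form_split dot_square_norm inner_commute cong: map_cong)

definition spike_support :: "(real^'d) set" where
  "spike_support = {x. norm x = r \<and> x \<bullet> u \<in> {- r, 0, r}}"

lemma AE_\<mu>_spike_support: "AE x in \<mu>. x \<in> spike_support"
proof -
  have "fst ` set (symmetrize spike_atoms) \<subseteq> spike_support"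
    using norm_u ws_nonzero ws_orthogonal trace_pos
    by (auto simp: set_symmetrize spike_atoms_def spike_support_def dot_square_norm inner_commute)
  then show ?thesis
    unfolding \<mu>_def using AE_discrete_measure[OF pmf_of_list_wf_symmetrize[OF pmf_of_list_wf_spike_atoms]]
    by (auto elim!: eventually_mono)
qed

lemma measure_\<mu>_sphere: "measure \<mu> {x. (norm x)\<^sup>2 = T} = 1"
proof -
  interpret prob_space \<mu> by (rule prob_space_\<mu>)
  have "{x. (norm x)\<^sup>2 = T} \<in> sets borel"
    by (intro borel_closed closed_Collect_eq continuous_intros)
  moreover have "AE x in \<mu>. x \<in> {x. (norm x)\<^sup>2 = T}"
    using AE_\<mu>_spike_support by eventually_elim (simp add: spike_support_def less_imp_le[OF trace_pos])
  ultimately show ?thesis by (simp add: prob_eq_1 sets_\<mu>)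
qed

definition spike_centered :: "real^'d \<Rightarrow> real" where
  "spike_centered x = indicator {x. x \<bullet> u \<noteq> 0} x - M / T"

lemma borel_measurable_spike_centered [measurable]: "spike_centered \<in> borel_measurable borel"
proof -
  have "{x::real^'d. x \<bullet> u \<noteq> 0} \<in> sets borel"
    by (intro borel_open open_Collect_neq continuous_intros)
  then show ?thesis
    unfolding spike_centered_def by (intro borel_measurable_diff borel_measurable_indicator) simp_all
qed

lemma abs_spike_centered_le: "\<bar>spike_centered x\<bar> \<le> 1"
  using op_norm_pos op_norm_le_half_trace trace_pos
  by (auto simp: spike_centered_def indicator_def field_simps)

lemma spike_centered_values:
  "spike_centered (r *\<^sub>R u) = 1 - M / T" "w \<in> set ws \<Longrightarrow> spike_centered ((r / norm w) *\<^sub>R w) = - (M / T)"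
  using norm_u ws_orthogonal trace_pos by (simp_all add: spike_centered_def dot_square_norm)

lemma integral_\<mu>_spike_centered_power:
  "(\<integral>x. spike_centered x ^ k \<partial>\<mu>) = M / T * (1 - M / T) ^ k + (1 - M / T) * (- (M / T)) ^ k"
proof -
  have "(\<Sum>w\<leftarrow>ws. (norm w)\<^sup>2 * c / T) = (\<Sum>w\<leftarrow>ws. (norm w)\<^sup>2) * (c / T)" for c
    unfolding sum_list_mult_const[symmetric] by simp
  then have weights: "(\<Sum>w\<leftarrow>ws. (norm w)\<^sup>2 * c / T) = (1 - M / T) * c" for c
    using trace_pos by (simp add: sum_list_norm_ws field_simps)
  have "spike_centered (- x) = spike_centered x" for x
    by (simp add: spike_centered_def indicator_def)
  then show ?thesis
    by (simp add: integral_\<mu>_even spike_centered_values weights cong: map_cong)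
qed

lemma integral_\<mu>_spike_centered: "(\<integral>x. spike_centered x \<partial>\<mu>) = 0"
  using integral_\<mu>_spike_centered_power[of 1] by (simp add: algebra_simps)

lemma spike_support_inner_power2: "x \<in> spike_support \<Longrightarrow> (x \<bullet> u)\<^sup>2 = T * (spike_centered x + M / T)"
  using trace_pos by (auto simp: spike_support_def spike_centered_def)

lemma integral_\<mu>_proj:
  fixes h :: "real \<Rightarrow> real"
  assumes "h \<in> borel_measurable borel"
  shows "(\<integral>y. h y \<partial>distr \<mu> borel (\<lambda>x. x \<bullet> v)) = (\<integral>x. h (x \<bullet> v) \<partial>\<mu>)"
    and "integrable (distr \<mu> borel (\<lambda>x. x \<bullet> v)) h"
  using assms by (simp_all add: integral_distr integrable_distr_eq integrable_\<mu>)

lemma W21_sq_ge_spike_count: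
  assumes "0 < n" and X: "\<forall>i<n. X i \<in> spike_support"
  shows "ennreal (T / n * \<bar>\<Sum>i<n. spike_centered (X i)\<bar>) \<le> W21_sq \<mu> (sym_empirical X n)"
proof -
  let ?\<nu>1 = "distr \<mu> borel (\<lambda>x. x \<bullet> u)" and ?\<nu>2 = "distr (sym_empirical X n) borel (\<lambda>x. x \<bullet> u)"
  have "{- r, 0, r} \<in> sets borel" by (simp add: borel_closed)
  then have "AE y in ?\<nu>1. y \<in> {- r, 0, r}"
    using AE_\<mu>_spike_support by (subst AE_distr_iff) (auto simp: spike_support_def elim!: eventually_mono)
  moreover have "AE y in ?\<nu>2. y \<in> {- r, 0, r}"
    using AE_sym_empirical_proj[OF assms(1), of X u]
    by (rule eventually_mono) (use X in \<open>auto simp: spike_support_def\<close>)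
  ultimately have "ennreal \<bar>(\<integral>y. y\<^sup>2 \<partial>?\<nu>1) - (\<integral>y. y\<^sup>2 \<partial>?\<nu>2)\<bar> \<le> W2_sq ?\<nu>1 ?\<nu>2"
    by (intro W2_sq_ge_abs_diff_second_moments integral_\<mu>_proj integrable_sym_empirical_proj assms(1)) simp_all
  also have "\<dots> \<le> W21_sq \<mu> (sym_empirical X n)"
    by (rule W2_sq_proj_le_W21_sq[OF norm_u])
  also have "(\<integral>y. y\<^sup>2 \<partial>?\<nu>1) = M"
    by (simp add: integral_\<mu>_proj integral_\<mu>_inner_power2 quad_form_u)
  also have "(\<integral>y. y\<^sup>2 \<partial>?\<nu>2) = (\<Sum>i<n. (X i \<bullet> u)\<^sup>2) / n"
    by (rule integral_sym_empirical_proj[OF assms(1)]) simp_all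
  also have "\<dots> = T / n * (\<Sum>i<n. spike_centered (X i)) + M"
  proof -
    have "(\<Sum>i<n. (X i \<bullet> u)\<^sup>2) = (\<Sum>i<n. T * spike_centered (X i) + M)"
      using X trace_pos by (intro sum.cong) (auto simp: spike_support_inner_power2 field_simps)
    then show ?thesis
      using assms(1) by (simp add: sum.distrib field_simps flip: sum_distrib_left)
  qed
  finally show ?thesis using trace_pos by (simp add: abs_mult)
qed

lemma W21_sq_ge_sample_direction:
  assumes "0 < n" and X0: "X 0 \<in> spike_support"
  shows "ennreal (2 / 7 * (T / n) - 2 / 5 * M) \<le> W21_sq \<mu> (sym_empirical X n)"
proof -
  define v where "v = (1 / r) *\<^sub>R X 0"
  have norm_X0: "norm (X 0) = r" using X0 by (simp add: spike_support_def)
  then have norm_v: "norm v = 1" using trace_pos by (simp add: v_def)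
  have X0_v: "X 0 \<bullet> v = r" using norm_X0 trace_pos by (simp add: v_def dot_square_norm real_div_sqrt)
  let ?\<nu>1 = "distr \<mu> borel (\<lambda>x. x \<bullet> v)" and ?\<nu>2 = "distr (sym_empirical X n) borel (\<lambda>x. x \<bullet> v)"
  have "(\<integral>y. y\<^sup>2 \<partial>?\<nu>1) \<le> M"
    using quad_form_le_op_norm[of \<Sigma> v] norm_v by (simp add: integral_\<mu>_proj integral_\<mu>_inner_power2)
  moreover have "T / n \<le> (\<integral>y. y\<^sup>2 \<partial>?\<nu>2)"
  proof -
    have "(X 0 \<bullet> v)\<^sup>2 \<le> (\<Sum>i<n. (X i \<bullet> v)\<^sup>2)"
      using assms(1) by (intro member_le_sum) auto
    then show ?thesis
      using assms(1) X0_v r_squared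
      by (simp add: integral_sym_empirical_proj[OF assms(1)] divide_right_mono)
  qed
  ultimately have "2 / 7 * (T / n) - 2 / 5 * M \<le> 2 / 7 * (\<integral>y. y\<^sup>2 \<partial>?\<nu>2) - 2 / 5 * (\<integral>y. y\<^sup>2 \<partial>?\<nu>1)"
    by simp
  then have "ennreal (2 / 7 * (T / n) - 2 / 5 * M) \<le> W2_sq ?\<nu>1 ?\<nu>2"
    by (rule order_trans[OF ennreal_leI W2_sq_ge_second_moments])
      (simp_all add: integral_\<mu>_proj integrable_sym_empirical_proj assms(1))
  also have "\<dots> \<le> W21_sq \<mu> (sym_empirical X n)"
    by (rule W2_sq_proj_le_W21_sq[OF norm_v])
  finally show ?thesis .
qed

lemma centered_bounded_rv_spike: "centered_bounded_rv \<mu> spike_centered 1"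
  by (intro centered_bounded_rv.intro centered_bounded_rv_axioms.intro prob_space_\<mu>)
    (simp_all add: abs_spike_centered_le integral_\<mu>_spike_centered measurable_cong_sets[OF sets_\<mu> refl])

lemma integral_\<mu>_spike_centered_power2: "(\<integral>x. (spike_centered x)\<^sup>2 \<partial>\<mu>) = M / T * (1 - M / T)"
proof -
  define p where "p = M / T"
  have "(\<integral>x. (spike_centered x)\<^sup>2 \<partial>\<mu>) = p * (1 - p)\<^sup>2 + (1 - p) * (- p)\<^sup>2"
    using integral_\<mu>_spike_centered_power[of 2] by (simp add: p_def)
  also have "\<dots> = p * (1 - p)" by (simp add: power2_eq_square algebra_simps)
  finally show ?thesis by (simp add: p_def)
qed

lemma integral_\<mu>_spike_centered_power4_le:
  "(\<integral>x. spike_centered x ^ 4 \<partial>\<mu>) \<le> (\<integral>x. (spike_centered x)\<^sup>2 \<partial>\<mu>)"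
proof (rule integral_mono)
  show "spike_centered x ^ 4 \<le> (spike_centered x)\<^sup>2" for x
  proof -
    have "(spike_centered x)\<^sup>2 \<le> 1"
      using abs_spike_centered_le[of x] by (simp add: abs_square_le_1)
    then show ?thesis
      using mult_left_mono[of "(spike_centered x)\<^sup>2" 1 "(spike_centered x)\<^sup>2"]
      by (simp add: power4_eq_xxxx power2_eq_square mult_ac)
  qed
qed (simp_all add: integrable_\<mu>)

lemma expected_abs_spike_count_ge:
  fixes n :: nat
  assumes "0 < n"
  defines "s \<equiv> n * M / T"
  shows "(1 + sqrt s) / 16
    \<le> max (2 / 7 - 2 / 5 * s) (\<integral>X. \<bar>\<Sum>i<n. spike_centered (X i)\<bar> \<partial>PiM {..<n} (\<lambda>_. \<mu>))"
proof -
  interpret S: centered_bounded_rv \<mu> spike_centered 1 by (rule centered_bounded_rv_spike)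
  define m2 where "m2 = (\<integral>x. (spike_centered x)\<^sup>2 \<partial>\<mu>)"
  define \<sigma> where "\<sigma> = sqrt (n * m2)"
  define p where "p = M / T"
  have p: "0 < p" "p \<le> 1 / 2"
    using op_norm_pos op_norm_le_half_trace trace_pos by (simp_all add: p_def field_simps)
  have m2: "m2 = p * (1 - p)" by (simp add: m2_def p_def integral_\<mu>_spike_centered_power2)
  have "0 < n * m2" using assms(1) p by (simp add: m2)
  then have \<sigma>: "0 < \<sigma>" "\<sigma>\<^sup>2 = n * m2" by (simp_all add: \<sigma>_def)
  have "0 \<le> n * p * (1 / 2 - p)" using p by simp
  then have "s / 2 \<le> \<sigma>\<^sup>2" by (simp add: \<sigma>(2) m2 s_def p_def algebra_simps)
  then have "(1 + sqrt s) / 16 \<le> max (2 / 7 - 2 / 5 * s) (9 / 16 * \<sigma> - 1 / (16 * \<sigma>))"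
    using \<sigma>(1) op_norm_pos trace_pos by (intro one_plus_sqrt_le_max) (simp_all add: s_def)
  also have "9 / 16 * \<sigma> - 1 / (16 * \<sigma>) \<le> (\<integral>X. \<bar>\<Sum>i<n. spike_centered (X i)\<bar> \<partial>PiM {..<n} (\<lambda>_. \<mu>))"
  proof (rule integral_abs_ge_of_moments)
    show "(\<integral>X. (\<Sum>i<n. spike_centered (X i))\<^sup>2 \<partial>PiM {..<n} (\<lambda>_. \<mu>)) = \<sigma>\<^sup>2"
      by (simp add: S.integral_PiM_sum_power2 \<sigma>(2) m2_def)
    have "(real n * m2)\<^sup>2 - real n * (real n - 1) * m2\<^sup>2 = real n * m2\<^sup>2"
      by (simp add: power2_eq_square algebra_simps)
    then have "real n * (real n - 1) * m2\<^sup>2 \<le> (real n * m2)\<^sup>2"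
      by (metis diff_ge_0_iff_ge of_nat_0_le_iff zero_le_mult_iff zero_le_power2)
    moreover have "\<sigma> ^ 4 = (real n * m2)\<^sup>2"
      by (simp add: \<sigma>(2)[symmetric] flip: power_mult)
    ultimately show "(\<integral>X. (\<Sum>i<n. spike_centered (X i)) ^ 4 \<partial>PiM {..<n} (\<lambda>_. \<mu>)) \<le> \<sigma>\<^sup>2 + 3 * \<sigma> ^ 4"
      using mult_left_mono[OF integral_\<mu>_spike_centered_power4_le, of "real n"]
      by (simp add: S.integral_PiM_sum_power4 \<sigma>(2) m2_def)
  qed (use \<sigma>(1) S.integrable_PiM_sum_power[of n] S.integrable_PiM_sum_power[of n 1] in simp_all)
  finally show ?thesis by simp
qed

lemma AE_W21_sq_ge_max:
  fixes n :: nat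
  assumes "0 < n"
  shows "AE X in PiM {..<n} (\<lambda>_. \<mu>).
    ennreal (max (T / n * \<bar>\<Sum>i<n. spike_centered (X i)\<bar>) (2 / 7 * (T / n) - 2 / 5 * M))
      \<le> W21_sq \<mu> (sym_empirical X n)"
proof -
  have "AE X in PiM {..<n} (\<lambda>_. \<mu>). \<forall>i\<in>{..<n}. X i \<in> spike_support"
    by (intro AE_finite_allI AE_PiM_component prob_space_\<mu> AE_\<mu>_spike_support) auto
  then show ?thesis
  proof (rule eventually_mono)
    fix X assume "\<forall>i\<in>{..<n}. X i \<in> spike_support"
    then have "\<forall>i<n. X i \<in> spike_support" "X 0 \<in> spike_support" using assms by auto
    then show "ennreal (max (T / n * \<bar>\<Sum>i<n. spike_centered (X i)\<bar>) (2 / 7 * (T / n) - 2 / 5 * M))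
      \<le> W21_sq \<mu> (sym_empirical X n)"
      using W21_sq_ge_spike_count[OF assms] W21_sq_ge_sample_direction[OF assms]
      by (simp add: max_def)
  qed
qed

lemma expected_W21_sq_ge:
  fixes n :: nat
  assumes "0 < n"
  shows "ennreal (1 / 16 * M * (T / (n * M) + sqrt (T / (n * M))))
    \<le> (\<integral>\<^sup>+X. W21_sq \<mu> (sym_empirical X n) \<partial>PiM {..<n} (\<lambda>_. \<mu>))"
proof -
  interpret S: centered_bounded_rv \<mu> spike_centered 1 by (rule centered_bounded_rv_spike)
  let ?P = "PiM {..<n} (\<lambda>_. \<mu>)" and ?dev = "\<lambda>X. T / n * \<bar>\<Sum>i<n. spike_centered (X i)\<bar>"
  have "1 / 16 * M * (T / (n * M) + sqrt (T / (n * M))) = T / n * ((1 + sqrt (n * M / T)) / 16)"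
    using assms op_norm_pos trace_pos by (rule lower_bound_rescale)
  also have "\<dots> \<le> T / n * max (2 / 7 - 2 / 5 * (n * M / T)) (\<integral>X. \<bar>\<Sum>i<n. spike_centered (X i)\<bar> \<partial>?P)"
    using mult_left_mono[OF expected_abs_spike_count_ge[OF assms], of "T / n"] trace_pos by simp
  also have "\<dots> = max (2 / 7 * (T / n) - 2 / 5 * M) (\<integral>X. ?dev X \<partial>?P)"
    using assms trace_pos by (simp add: max_mult_distrib_left algebra_simps)
  finally have "ennreal (1 / 16 * M * (T / (n * M) + sqrt (T / (n * M))))
      \<le> ennreal (max (\<integral>X. ?dev X \<partial>?P) (2 / 7 * (T / n) - 2 / 5 * M))"
    by (simp add: ennreal_leI max.commute)
  also have "\<dots> \<le> (\<integral>\<^sup>+X. ennreal (max (?dev X) (2 / 7 * (T / n) - 2 / 5 * M)) \<partial>?P)"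
    using S.integrable_PiM_sum_power[of n 1] trace_pos
    by (intro ennreal_max_integral_le_nn_integral S.prob_space_PiM_iid) simp_all
  also have "\<dots> \<le> (\<integral>\<^sup>+X. W21_sq \<mu> (sym_empirical X n) \<partial>?P)"
    by (rule nn_integral_mono_AE[OF AE_W21_sq_ge_max[OF assms]])
  finally show ?thesis .
qed
end

theorem proposition1p8:
  fixes \<Sigma> :: "real^'d^'d"
  assumes "psd \<Sigma>"
    and "op_norm \<Sigma> \<le> trace \<Sigma> / 2"
  shows "\<exists>\<mu> :: (real^'d) measure.
      prob_space \<mu> \<and> sets \<mu> = sets borel \<and> symmetric_measure \<mu> \<and>
      measure \<mu> {x. (norm x)\<^sup>2 = trace \<Sigma>} = 1 \<and>
      (\<forall>i j. (\<integral>x. x $ i * x $ j \<partial>\<mu>) = \<Sigma> $ i $ j) \<and>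
      (\<forall>n::nat. n \<ge> 1 \<longrightarrow>
         (\<integral>\<^sup>+ X. W21_sq \<mu> (sym_empirical X n) \<partial>(PiM {..<n} (\<lambda>_. \<mu>)))
         \<ge> ennreal (1/16 * op_norm \<Sigma> *
              (trace \<Sigma> / (real n * op_norm \<Sigma>) + sqrt (trace \<Sigma> / (real n * op_norm \<Sigma>)))))"
proof (cases "\<Sigma> = 0")
  case True
  \<comment> \<open>the Dirac mass at 0 works: op_norm 0 = 0 makes the required bound 0\<close>
  have "{x::real^'d. (norm x)\<^sup>2 = 0} \<in> sets borel"
    by (intro borel_closed closed_Collect_eq continuous_intros)
  then show ?thesis
    using True by (intro exI[of _ "return borel 0"])
      (simp add: prob_space_return symmetric_measure_return_0 measure_return integral_return
        op_norm_def onorm_zero trace_def)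
next
  case False
  then have "0 < op_norm \<Sigma>" by (simp add: op_norm_pos_iff)
  obtain u ws where "norm u = 1" "\<Sigma> = op_norm \<Sigma> *\<^sub>R outer_prod u + sum_list (map outer_prod ws)"
    and "\<forall>w\<in>set ws. w \<noteq> 0 \<and> w \<bullet> u = 0"
    using psd_top_eigen_split[OF assms(1)] by blast
  then interpret spiked_split \<Sigma> u ws
    using \<open>0 < op_norm \<Sigma>\<close> assms(2) by unfold_locales auto
  show ?thesis
    using prob_space_\<mu> sets_\<mu> symmetric_measure_\<mu> measure_\<mu>_sphere integral_\<mu>_covariance
      expected_W21_sq_ge
    by (intro exI[of _ \<mu>]) auto
qed

end
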